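(* A positive integer $m$ does not occur in the sequence $(a(n))_{n\ge 0}$ if and only if $m=\lfloor \varphi^2 k+\tfrac12\rfloor$ for some integer $k\ge 1$.
   Context: $\varphi=(1+\sqrt5)/2$. Let $(F_n)_{n\ge 0}$ be the Fibonacci numbers: $F_0=0$, $F_1=1$, $F_n=F_{n-1}+F_{n-2}$ for $n\ge 2$. Define $(a(n))_{n\ge 0}$ (OEIS A105774) by $a(0)=0$, $a(1)=1$, and for $n\ge 2$, $a(n)=F_{j+1}-a(n-F_j)$, where $j\ge 2$ is the unique index with $F_j<n\le F_{j+1}$. *)

theory Defs
  imports Complex_Main "HOL-Number_Theory.Fib"
begin

definition phi :: real where "phi = (1 + sqrt 5) / 2"

text \<open>For n \<ge> 2, fidx n is the unique j \<ge> 2 with fib j < n \<le> fib (j+1).\<close>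
definition fidx :: "nat \<Rightarrow> nat" where
  "fidx n = Suc (Suc (THE i. fib (Suc (Suc i)) < n \<and> n \<le> fib (Suc (Suc (Suc i)))))"

lemma fib_pos_ge1: "j \<ge> 1 \<Longrightarrow> fib j \<ge> 1"
  using fib_neq_0_nat[of j] by simp

function A105774 :: "nat \<Rightarrow> nat" where
  "A105774 n = (if n = 0 then 0 else if n = 1 then 1
     else fib (Suc (fidx n)) - A105774 (n - fib (fidx n)))"
  by auto
termination
proof (relation "measure id")
  fix n :: nat
  assume "\<not> n = 0" "n \<noteq> 1"
  show "(n - fib (fidx n), n) \<in> measure id"
    using \<open>\<not> n = 0\<close> fib_pos_ge1[of "fidx n"] by (simp add: fidx_def)
qed simp

end

theory Submission
  imports Defs
begin

text \<open>
  Let \<open>B\<close> be the set of integers nearest to the multiples \<open>k\<phi>\<^sup>2\<close>. Since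
  \<open>F\<^sub>n\<^sub>+\<^sub>2 = \<phi>\<^sup>2 F\<^sub>n + \<psi>\<^sup>n\<close>, the reflection \<open>y \<mapsto> F\<^sub>n\<^sub>+\<^sub>2 - y\<close> moves the distance from \<open>y\<close> to the
  nearest multiple of \<open>\<phi>\<^sup>2\<close> only by \<open>\<psi>\<^sup>n\<close>, so it preserves membership in \<open>B\<close> for
  \<open>1 \<le> y < F\<^sub>n\<close> unless \<open>2k\<phi>\<^sup>2\<close> lies within \<open>2|\<psi>|\<^sup>n\<close> of \<open>p = 2y \<plusminus> 1 < 2F\<^sub>n\<close>. Multiplying
  \<open>2k\<phi>\<^sup>2 - p\<close> by \<open>\<phi>\<^sup>n\<close> would then give an element \<open>c + d\<phi>\<close> of \<open>\<int>[\<phi>]\<close> of absolute value at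
  most 2 whose conjugate is non-zero, of the same sign and smaller than 1, and there is none.
  The recursion of \<open>a\<close> performs the same reflection: its values on \<open>(F\<^sub>N\<^sub>+\<^sub>1, F\<^sub>N\<^sub>+\<^sub>2]\<close> are
  \<open>F\<^sub>N\<^sub>+\<^sub>2 - v\<close> for the values \<open>v\<close> on \<open>[1, F\<^sub>N]\<close>. As \<open>F\<^sub>N\<^sub>+\<^sub>1 \<in> B\<close>, induction shows that
  \<open>a\<close> maps \<open>[1, F\<^sub>N]\<close> onto the positive integers below \<open>F\<^sub>N\<close> outside \<open>B\<close>.
\<close>

definition psi :: real where "psi = 1 - phi"

lemma sqrt5_bounds: "2236/1000 < sqrt (5::real)" "sqrt (5::real) < 22361/10000"
  by (rule real_less_rsqrt real_less_lsqrt; simp add: power2_eq_square)+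

lemma phi_square: "phi^2 = phi + 1"
  unfolding phi_def by (simp add: power2_eq_square field_simps)

lemma psi_square: "psi^2 = psi + 1"
  unfolding psi_def phi_def by (simp add: power2_eq_square field_simps)

lemma phi_times_psi: "phi * psi = -1"
  unfolding psi_def phi_def by (simp add: field_simps)

lemma phi_minus_psi: "phi - psi = sqrt 5"
  unfolding psi_def phi_def by (simp add: field_simps)

lemma phi_bounds: "1618/1000 < phi" "phi < 161805/100000"
  unfolding phi_def using sqrt5_bounds by simp_all

lemma psi_bounds: "-61805/100000 < psi" "psi < -618/1000"
  unfolding psi_def using phi_bounds by simp_all

lemma golden_power_Suc:
  fixes x :: "'a :: comm_ring_1"
  assumes "x^2 = x + 1"
  shows "x ^ Suc n = of_nat (fib n) + of_nat (fib (Suc n)) * x"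
proof (induction n rule: fib.induct)
  case (3 n)
  have "x ^ Suc (Suc (Suc n)) = x ^ Suc n * x^2" by (simp add: power2_eq_square)
  also have "\<dots> = x ^ Suc n + x ^ Suc (Suc n)" by (simp add: assms algebra_simps)
  finally show ?case using 3 by (simp add: algebra_simps)
qed (use assms in \<open>simp_all add: power2_eq_square\<close>)

lemma golden_linear_times_power:
  fixes x :: "'a :: comm_ring_1" and a b :: int
  assumes "x^2 = x + 1"
  shows "(of_int a + of_int b * x) * x ^ Suc n =
    of_int (a * fib n + b * fib (Suc n)) + of_int (a * fib (Suc n) + b * fib n + b * fib (Suc n)) * x"
proof -
  have "(of_int a + of_int b * x) * x ^ Suc n
      = (of_int a + of_int b * x) * (of_nat (fib n) + of_nat (fib (Suc n)) * x)"
    by (subst golden_power_Suc[OF assms]) (rule refl)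
  also have "\<dots> = of_int a * of_nat (fib n) + of_int b * of_nat (fib (Suc n)) * x^2
      + (of_int a * of_nat (fib (Suc n)) + of_int b * of_nat (fib n)) * x"
    by (simp add: algebra_simps power2_eq_square)
  finally show ?thesis by (simp add: assms algebra_simps)
qed

lemma fib_times_sqrt5: "real (fib n) * sqrt 5 = phi^n - psi^n"
  using fib_closed_form[of n] unfolding phi_def psi_def by (simp add: field_simps)

lemma fib_add_2_phi_psi: "real (fib (n+2)) = phi^2 * fib n + psi^n"
proof -
  have "real (fib (n+2)) * sqrt 5 = phi^n * phi^2 - psi^n * psi^2"
    by (metis fib_times_sqrt5 power_add)
  also have "\<dots> = phi^2 * (phi^n - psi^n) + psi^n * (phi^2 - psi^2)"
    by (simp add: algebra_simps)
  also have "\<dots> = (phi^2 * fib n + psi^n) * sqrt 5"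
    by (simp add: fib_times_sqrt5 phi_square psi_square phi_minus_psi algebra_simps)
  finally show ?thesis by simp
qed

lemma abs_psi_power_times_phi_power: "\<bar>psi\<bar>^n * phi^n = 1"
proof -
  have "\<bar>psi\<bar> * phi = 1" using phi_times_psi phi_bounds psi_bounds by (simp add: abs_if algebra_simps)
  then show ?thesis by (metis power_mult_distrib power_one)
qed

lemma fib_abs_psi_power_bound:
  assumes "n \<ge> 1"
  shows "(2 * real (fib n) - 1) * \<bar>psi\<bar>^n < 1"
proof -
  define u where "u = \<bar>psi\<bar>^n"
  have u_pos: "0 < u" unfolding u_def using psi_bounds by simp
  have "\<bar>psi\<bar>^n \<le> \<bar>psi\<bar>^1" using assms psi_bounds by (intro power_decreasing) auto
  hence u_less: "u < 61805/100000" unfolding u_def using psi_bounds by simp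
  have "\<bar>psi^n\<bar> = u" unfolding u_def by (simp add: power_abs)
  hence "real (fib n) * sqrt 5 \<le> phi^n + u" using fib_times_sqrt5[of n] by linarith
  hence "real (fib n) * sqrt 5 * u \<le> phi^n * u + u * u"
    using u_pos by (metis distrib_right mult_right_mono less_imp_le)
  hence "real (fib n) * u * sqrt 5 \<le> 1 + u * u"
    using abs_psi_power_times_phi_power[of n] by (simp add: u_def algebra_simps)
  moreover have "u * u \<le> 61805/100000 * u" using u_pos u_less by simp
  moreover have "real (fib n) * u * (2236/1000) \<le> real (fib n) * u * sqrt 5"
    using sqrt5_bounds u_pos by (intro mult_left_mono) auto
  ultimately have "real (fib n) * u * (2236/1000) \<le> 1 + 61805/100000 * u" by linarith
  then show ?thesis using u_pos u_less unfolding u_def[symmetric] by (simp add: algebra_simps)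
qed

text \<open>Equality would give \<open>5k\<^sup>2 = (q - 3k)\<^sup>2\<close>, which is impossible for odd \<open>q\<close> by parity.\<close>
lemma two_phi_square_multiple_ne_odd:
  fixes k q :: int
  assumes "odd q"
  shows "2 * of_int k * phi^2 \<noteq> of_int q"
proof
  assume h: "2 * of_int k * phi^2 = of_int q"
  have "2 * of_int k * phi^2 = 3*k + k * sqrt 5" unfolding phi_square by (simp add: phi_def field_simps)
  hence "k * sqrt 5 = q - 3*k" using h by simp
  hence "(k * sqrt 5)^2 = (q - 3*k)^2" by simp
  hence "real_of_int (5*k^2) = real_of_int ((q-3*k)^2)" by (simp add: power_mult_distrib)
  hence "5*k^2 = (q-3*k)^2" by linarith
  hence "even k \<longleftrightarrow> even (q - 3*k)" by (metis even_mult_iff even_power odd_numeral zero_less_numeral)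
  then show False using assms by auto
qed

lemma golden_conjugates_not_small:
  fixes c d :: int
  assumes "\<bar>c + d*phi\<bar> \<le> 2" and "\<bar>c + d*psi\<bar> < 1"
    and "(c + d*phi) * (c + d*psi) \<ge> 0" and "c + d*psi \<noteq> 0"
  shows False
proof -
  have "d * sqrt 5 = (c + d*phi) - (c + d*psi)" by (simp add: phi_minus_psi[symmetric] algebra_simps)
  hence "\<bar>real_of_int d\<bar> * sqrt 5 < 3" using assms(1,2) by (simp add: abs_mult)
  moreover have "\<bar>real_of_int d\<bar> * 2 \<le> \<bar>real_of_int d\<bar> * sqrt 5"
    using sqrt5_bounds by (intro mult_left_mono) auto
  ultimately have "\<bar>d\<bar> \<le> 1" by linarith
  then consider "d = 0" | "d = 1" | "d = -1" by linarith
  then show False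
  proof cases
    case 1
    then show False using assms by simp
  next
    case 2
    with assms(2) have "c = 0 \<or> c = 1" using psi_bounds by auto
    then show False using assms(1,3) 2 phi_times_psi phi_bounds by auto
  next
    case 3
    with assms(2) have "c = 0 \<or> c = -1" using psi_bounds by auto
    then show False using assms(1,3) 3 phi_times_psi phi_bounds by auto
  qed
qed

lemma two_psi_square_multiple_bounds:
  fixes k p :: int
  assumes "1 \<le> p" and "\<bar>2*k*phi^2 - p\<bar> < 1"
  shows "0 < 2*k*psi^2" "2*k*psi^2 < p"
proof -
  have phi_sq: "phi^2 > 2618/1000" using phi_square phi_bounds by simp
  have psi_sq: "psi^2 < 382/1000" "psi^2 > 0" using psi_square psi_bounds by simp_all
  have k: "k \<ge> 1"
  proof (rule ccontr)
    assume "\<not> k \<ge> 1"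
    hence "2*k*phi^2 \<le> 0" using phi_sq by (simp add: mult_nonpos_nonneg)
    then show False using assms by simp
  qed
  then show "0 < 2*k*psi^2" using psi_sq by simp
  have "2*k*phi^2 < p + 1" using assms(2) by simp
  moreover have "2*k*(2618/1000) \<le> 2*k*phi^2" "2*k*psi^2 \<le> 2*k*(382/1000)"
    using phi_sq psi_sq k by simp_all
  ultimately show "2*k*psi^2 < p" using assms(1) by linarith
qed

text \<open>Multiplying \<open>2k\<phi>\<^sup>2 - p\<close> by \<open>\<phi>\<^sup>n\<close> and its conjugate \<open>2k\<psi>\<^sup>2 - p\<close> by \<open>\<psi>\<^sup>n\<close> gives a
  conjugate pair in \<open>\<int>[\<phi>]\<close> that is too small to exist.\<close>
lemma two_phi_square_multiple_not_near:
  fixes k p :: int and n :: nat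
  assumes n: "n \<ge> 2" and p: "1 \<le> p" "p \<le> 2 * int (fib n) - 1"
  shows "\<not> ((2*k*phi^2 - p) * psi^n \<le> 0 \<and> \<bar>2*k*phi^2 - p\<bar> \<le> 2 * \<bar>psi\<bar>^n)"
proof
  define x where "x = 2*k*phi^2 - p"
  define x' where "x' = 2*k*psi^2 - p"
  assume "(2*k*phi^2 - p) * psi^n \<le> 0 \<and> \<bar>2*k*phi^2 - p\<bar> \<le> 2 * \<bar>psi\<bar>^n"
  then have sign: "x * psi^n \<le> 0" and small: "\<bar>x\<bar> \<le> 2 * \<bar>psi\<bar>^n" unfolding x_def by auto
  have "\<bar>psi\<bar>^n \<le> \<bar>psi\<bar>^2" using n psi_bounds by (intro power_decreasing) auto
  moreover have "\<bar>psi\<bar>^2 < 1/2" using psi_square psi_bounds by (simp add: power_abs[symmetric])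
  ultimately have "\<bar>2*k*phi^2 - p\<bar> < 1" using small x_def by simp
  hence x'_neg: "x' < 0" and x'_gt: "x' > - p"
    using two_psi_square_multiple_bounds[OF p(1)] unfolding x'_def by simp_all
  obtain m where m: "n = Suc m" using n by (cases n) auto
  define a where "a = 2*k - p"
  define c where "c = a * fib m + 2*k * fib (Suc m)"
  define d where "d = a * fib (Suc m) + 2*k * fib m + 2*k * fib (Suc m)"
  have "x = of_int a + of_int (2*k) * phi" "x' = of_int a + of_int (2*k) * psi"
    unfolding x_def x'_def a_def phi_square psi_square by (simp_all add: algebra_simps)
  hence conj: "x * phi^n = c + d*phi" "x' * psi^n = c + d*psi"
    unfolding m c_def d_def
    by (simp_all only: golden_linear_times_power[OF phi_square] golden_linear_times_power[OF psi_square])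
  have "\<bar>x * phi^n\<bar> \<le> 2 * \<bar>psi\<bar>^n * phi^n"
    using small phi_bounds by (simp add: abs_mult mult_right_mono)
  hence "\<bar>c + d*phi\<bar> \<le> 2" using conj abs_psi_power_times_phi_power[of n] by simp
  moreover have "\<bar>x' * psi^n\<bar> < 1"
  proof -
    have "\<bar>x' * psi^n\<bar> \<le> (2 * real (fib n) - 1) * \<bar>psi\<bar>^n"
      unfolding abs_mult power_abs
      using p x'_neg x'_gt by (intro mult_right_mono) auto
    also have "\<dots> < 1" using fib_abs_psi_power_bound n by simp
    finally show ?thesis .
  qed
  moreover have "(x * phi^n) * (x' * psi^n) \<ge> 0"
  proof -
    have "(x * psi^n) * (x' * phi^n) \<ge> 0"
      using sign x'_neg phi_bounds by (simp add: mult_nonpos_nonpos mult_neg_pos less_imp_le)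
    then show ?thesis by (simp only: ac_simps)
  qed
  moreover have "x' * psi^n \<noteq> 0" using x'_neg psi_bounds by simp
  ultimately show False using golden_conjugates_not_small[of c d] unfolding conj by blast
qed

lemma abs_less_half_shift_iff:
  fixes t e :: real
  assumes "\<not> ((2*t - 1) * e \<le> 0 \<and> \<bar>2*t - 1\<bar> \<le> 2 * \<bar>e\<bar>)"
    and "\<not> ((2*t + 1) * e \<le> 0 \<and> \<bar>2*t + 1\<bar> \<le> 2 * \<bar>e\<bar>)"
  shows "\<bar>t\<bar> < 1/2 \<longleftrightarrow> \<bar>t + e\<bar> < 1/2"
  using assms by (cases "e \<ge> 0") (auto simp: abs_if mult_le_0_iff split: if_splits)

definition phi_square_beatty :: "nat \<Rightarrow> bool" where
  "phi_square_beatty m \<longleftrightarrow> (\<exists>k::nat. k \<ge> 1 \<and> int m = \<lfloor>phi ^ 2 * real k + 1/2\<rfloor>)"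

lemma phi_square_beatty_iff_near:
  assumes "m \<ge> 1"
  shows "phi_square_beatty m \<longleftrightarrow> (\<exists>k::int. \<bar>k*phi^2 - m\<bar> < 1/2)"
proof
  assume "phi_square_beatty m"
  then obtain k :: nat where k: "int m = \<lfloor>phi ^ 2 * real k + 1/2\<rfloor>"
    unfolding phi_square_beatty_def by blast
  have "real m \<le> phi ^ 2 * real k + 1/2" "phi ^ 2 * real k + 1/2 < real m + 1"
    using floor_correct[of "phi ^ 2 * real k + 1/2"] unfolding k[symmetric] by simp_all
  moreover have "2 * real_of_int (int k) * phi^2 \<noteq> real_of_int (2 * int m - 1)"
    by (rule two_phi_square_multiple_ne_odd) simp
  ultimately have "- (1/2) < real_of_int (int k) * phi^2 - m" "real_of_int (int k) * phi^2 - m < 1/2"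
    by (simp_all add: algebra_simps)
  hence "\<bar>real_of_int (int k) * phi^2 - m\<bar> < 1/2" unfolding abs_less_iff by linarith
  then show "\<exists>k::int. \<bar>k*phi^2 - m\<bar> < 1/2" by blast
next
  assume "\<exists>k::int. \<bar>k*phi^2 - m\<bar> < 1/2"
  then obtain k :: int where k: "\<bar>k*phi^2 - m\<bar> < 1/2" by blast
  have "k \<ge> 1"
  proof (rule ccontr)
    assume "\<not> k \<ge> 1"
    hence "k*phi^2 \<le> 0" by (simp add: mult_nonpos_nonneg)
    then show False using k assms by simp
  qed
  moreover have "int m = \<lfloor>phi ^ 2 * real (nat k) + 1/2\<rfloor>"
  proof (rule floor_unique[symmetric])
    have "real (nat k) = k" using \<open>k \<ge> 1\<close> by simp
    then show "of_int (int m) \<le> phi ^ 2 * real (nat k) + 1/2" "phi ^ 2 * real (nat k) + 1/2 < of_int (int m) + 1"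
      using k unfolding abs_less_iff by (simp_all add: algebra_simps)
  qed
  ultimately show "phi_square_beatty m" unfolding phi_square_beatty_def by (intro exI[of _ "nat k"]) simp
qed

lemma near_phi_square_multiple_shift_iff:
  fixes k :: int and y n :: nat
  assumes n: "n \<ge> 2" and y: "1 \<le> y" "y < fib n"
  shows "\<bar>k*phi^2 - y\<bar> < 1/2 \<longleftrightarrow> \<bar>k*phi^2 - y + psi^n\<bar> < 1/2"
proof (rule abs_less_half_shift_iff)
  have minus: "2 * (k*phi^2 - y) - 1 = 2*k*phi^2 - of_int (2 * int y + 1)"
    and plus: "2 * (k*phi^2 - y) + 1 = 2*k*phi^2 - of_int (2 * int y - 1)" by simp_all
  show "\<not> ((2 * (k*phi^2 - y) - 1) * psi^n \<le> 0 \<and> \<bar>2 * (k*phi^2 - y) - 1\<bar> \<le> 2 * \<bar>psi^n\<bar>)"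
    unfolding power_abs minus using y by (intro two_phi_square_multiple_not_near[OF n]) simp_all
  show "\<not> ((2 * (k*phi^2 - y) + 1) * psi^n \<le> 0 \<and> \<bar>2 * (k*phi^2 - y) + 1\<bar> \<le> 2 * \<bar>psi^n\<bar>)"
    unfolding power_abs plus using y by (intro two_phi_square_multiple_not_near[OF n]) simp_all
qed

lemma phi_square_beatty_reflect:
  fixes y n :: nat
  assumes n: "n \<ge> 2" and y: "1 \<le> y" "y < fib n"
  shows "phi_square_beatty (fib (n+2) - y) \<longleftrightarrow> phi_square_beatty y"
proof -
  have "fib n \<le> fib (n+2)" by (rule fib_mono) simp
  hence reflected: "real (fib (n+2) - y) = phi^2 * fib n + psi^n - y"
    using y fib_add_2_phi_psi[of n] by (simp add: of_nat_diff)
  have shift: "\<bar>k*phi^2 - real (fib (n+2) - y)\<bar> < 1/2 \<longleftrightarrow> \<bar>(int (fib n) - k)*phi^2 - y\<bar> < 1/2"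
    for k :: int
  proof -
    have "\<bar>k*phi^2 - real (fib (n+2) - y)\<bar> = \<bar>(int (fib n) - k)*phi^2 - y + psi^n\<bar>"
      unfolding reflected by (simp add: abs_minus_commute algebra_simps)
    then show ?thesis using near_phi_square_multiple_shift_iff[OF n y, of "int (fib n) - k"] by simp
  qed
  have "(\<exists>k::int. \<bar>k*phi^2 - real (fib (n+2) - y)\<bar> < 1/2) \<longleftrightarrow> (\<exists>k::int. \<bar>k*phi^2 - y\<bar> < 1/2)"
  proof
    assume "\<exists>k::int. \<bar>k*phi^2 - real (fib (n+2) - y)\<bar> < 1/2"
    then show "\<exists>k::int. \<bar>k*phi^2 - y\<bar> < 1/2" unfolding shift by blast
  next
    assume "\<exists>k::int. \<bar>k*phi^2 - y\<bar> < 1/2"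
    then obtain k :: int where "\<bar>(int (fib n) - (int (fib n) - k))*phi^2 - y\<bar> < 1/2" by auto
    then show "\<exists>k::int. \<bar>k*phi^2 - real (fib (n+2) - y)\<bar> < 1/2" unfolding shift[symmetric] by blast
  qed
  moreover have "fib (n+2) - y \<ge> 1" using y \<open>fib n \<le> fib (n+2)\<close> by simp
  ultimately show ?thesis using phi_square_beatty_iff_near y(1) by simp
qed

lemma phi_square_beatty_fib:
  assumes "j \<ge> 2"
  shows "phi_square_beatty (fib (j+2))"
proof -
  have "\<bar>psi\<bar>^j \<le> \<bar>psi\<bar>^2" using assms psi_bounds by (intro power_decreasing) auto
  moreover have "\<bar>psi\<bar>^2 < 1/2" using psi_square psi_bounds by (simp add: power_abs[symmetric])
  ultimately have "\<bar>int (fib j) * phi^2 - real (fib (j+2))\<bar> < 1/2"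
    using fib_add_2_phi_psi[of j] by (simp add: power_abs)
  moreover have "fib (j+2) \<ge> 1" by (rule fib_pos_ge1) simp
  ultimately show ?thesis using phi_square_beatty_iff_near by blast
qed

lemma not_phi_square_beatty_1_2: "\<not> phi_square_beatty 1" "\<not> phi_square_beatty 2"
proof -
  have "\<bar>k*phi^2 - m\<bar> \<ge> 1/2" if "1 \<le> m" "m \<le> 2" for k :: int and m :: real
  proof (cases "k \<ge> 1")
    case True
    hence "k*phi^2 \<ge> phi^2" using mult_right_mono[of 1 "real_of_int k" "phi^2"] by simp
    moreover have "phi^2 > 5/2" using phi_square phi_bounds by simp
    ultimately show ?thesis using that by linarith
  next
    case False
    hence "k*phi^2 \<le> 0" by (simp add: mult_nonpos_nonneg)
    then show ?thesis using that by linarith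
  qed
  from this[of 1] this[of 2] have
    "\<not> (\<exists>k::int. \<bar>k*phi^2 - 1\<bar> < 1/2)" "\<not> (\<exists>k::int. \<bar>k*phi^2 - 2\<bar> < 1/2)"
    by (auto simp: not_less)
  then show "\<not> phi_square_beatty 1" "\<not> phi_square_beatty 2"
    using phi_square_beatty_iff_near[of 1] phi_square_beatty_iff_near[of 2] by simp_all
qed

declare A105774.simps [simp del]

lemma fidx_eqI:
  assumes "j \<ge> 2" "fib j < n" "n \<le> fib (Suc j)"
  shows "fidx n = j"
proof -
  define P where "P i \<longleftrightarrow> fib (Suc (Suc i)) < n \<and> n \<le> fib (Suc (Suc (Suc i)))" for i
  obtain i0 where j: "j = Suc (Suc i0)" using assms(1) by (metis add_2_eq_Suc le_Suc_ex)
  have "P i0" unfolding P_def using assms j by simp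
  moreover have "i = i0" if "P i" for i
  proof (rule ccontr)
    assume "i \<noteq> i0"
    then consider "Suc i \<le> i0" | "Suc i0 \<le> i" by linarith
    then show False
      using that \<open>P i0\<close> fib_mono[of "Suc (Suc (Suc i))" "Suc (Suc i0)"]
        fib_mono[of "Suc (Suc (Suc i0))" "Suc (Suc i)"]
      unfolding P_def by cases auto
  qed
  ultimately have "(THE i. P i) = i0" by (rule the_equality)
  then show ?thesis unfolding fidx_def P_def[symmetric] using j by simp
qed

lemma A105774_block:
  assumes "j \<ge> 2" "fib j < n" "n \<le> fib (Suc j)"
  shows "A105774 n = fib (Suc j) - A105774 (n - fib j)"
proof -
  have "n \<ge> 2" using assms fib_pos_ge1[of j] by linarith
  then show ?thesis using fidx_eqI[OF assms] A105774.simps[of n] by simp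
qed

lemma Suc_le_fib_add_3: "Suc n \<le> fib (n+3)"
proof (induction n)
  case (Suc n)
  have "fib (Suc n + 3) = fib (n+3) + fib (n+2)"
    using fib_plus_2[of "n+2"] by (simp add: numeral_3_eq_3)
  moreover have "fib (n+2) \<ge> 1" by (rule fib_pos_ge1) simp
  ultimately show ?case using Suc by simp
qed (simp add: numeral_3_eq_3)

lemma A105774_image_block:
  assumes "N \<ge> 1"
  shows "A105774 ` {fib (N+1) + 1 .. fib (N+2)} = (\<lambda>v. fib (N+2) - v) ` A105774 ` {1..fib N}"
proof -
  have F: "fib (N+2) = fib (N+1) + fib N" by (rule fib_plus_2)
  have shifted: "{fib (N+1) + 1 .. fib (N+2)} = (\<lambda>i. i + fib (N+1)) ` {1..fib N}"
    unfolding F by (auto simp: image_iff intro!: bexI[of _ "x - fib (N+1)" for x])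
  have "A105774 ` {fib (N+1) + 1 .. fib (N+2)} = (\<lambda>i. A105774 (i + fib (N+1))) ` {1..fib N}"
    by (simp only: shifted image_image)
  also have "\<dots> = (\<lambda>i. fib (N+2) - A105774 i) ` {1..fib N}"
  proof (rule image_cong)
    show "A105774 (i + fib (N+1)) = fib (N+2) - A105774 i" if "i \<in> {1..fib N}" for i
      using A105774_block[of "N+1" "i + fib (N+1)"] that assms F by auto
  qed simp
  finally show ?thesis by (simp add: image_image)
qed

lemma image_reflect_non_phi_square_beatty:
  assumes "N \<ge> 2"
  shows "(\<lambda>v. fib (N+2) - v) ` {v. 1 \<le> v \<and> v < fib N \<and> \<not> phi_square_beatty v}
    = {m. fib (N+1) < m \<and> m < fib (N+2) \<and> \<not> phi_square_beatty m}" (is "?L = ?R")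
proof
  have F: "fib (N+2) = fib (N+1) + fib N" by (rule fib_plus_2)
  show "?L \<subseteq> ?R" using phi_square_beatty_reflect[OF assms] F by auto
  show "?R \<subseteq> ?L"
  proof
    fix m assume m: "m \<in> ?R"
    then have "1 \<le> fib (N+2) - m" "fib (N+2) - m < fib N" using F by auto
    with m have "fib (N+2) - m \<in> {v. 1 \<le> v \<and> v < fib N \<and> \<not> phi_square_beatty v}"
      using phi_square_beatty_reflect[OF assms, of "fib (N+2) - m"] by auto
    moreover have "m = fib (N+2) - (fib (N+2) - m)" using m by auto
    ultimately show "m \<in> ?L" by blast
  qed
qed

lemma A105774_image_upto_fib:
  "A105774 ` {1..fib (N+3)} = {m. 1 \<le> m \<and> m < fib (N+3) \<and> \<not> phi_square_beatty m}"
proof (induction N rule: fib.induct)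
  case 1
  have "A105774 1 = 1" "A105774 2 = 1"
    using A105774.simps[of 1] A105774_block[of 2 2] by (simp_all add: numeral_3_eq_3)
  moreover have "{m. 1 \<le> m \<and> m < (2::nat) \<and> \<not> phi_square_beatty m} = {1}"
    using not_phi_square_beatty_1_2 by auto
  moreover have "{1..2::nat} = {1, 2}" by auto
  moreover have "fib 3 = 2" by (simp add: numeral_3_eq_3)
  ultimately show ?case by simp
next
  case 2
  have "A105774 1 = 1" "A105774 2 = 1" "A105774 3 = 2"
    using A105774.simps[of 1] A105774_block[of 2 2] A105774_block[of 3 3] by (simp_all add: numeral_3_eq_3)
  moreover have "{m. 1 \<le> m \<and> m < (3::nat) \<and> \<not> phi_square_beatty m} = {1, 2}"
    using not_phi_square_beatty_1_2 by (auto simp: less_Suc_eq)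
  moreover have "{1..3::nat} = {1, 2, 3}" by auto
  moreover have "fib 4 = 3" by (simp add: numeral_eq_Suc)
  ultimately show ?case by simp
next
  case (3 n)
  define N where "N = n + 3"
  have F: "fib (N+2) = fib (N+1) + fib N" by (rule fib_plus_2)
  have IH1: "A105774 ` {1..fib N} = {m. 1 \<le> m \<and> m < fib N \<and> \<not> phi_square_beatty m}"
    and IH2: "A105774 ` {1..fib (N+1)} = {m. 1 \<le> m \<and> m < fib (N+1) \<and> \<not> phi_square_beatty m}"
    using 3 unfolding N_def by simp_all
  have "phi_square_beatty (fib (N+1))"
  proof -
    have "N + 1 = (n + 2) + 2" unfolding N_def by simp
    then show ?thesis by (simp only: phi_square_beatty_fib)
  qed
  have split: "{1..fib (N+2)} = {1..fib (N+1)} \<union> {fib (N+1) + 1 .. fib (N+2)}" using F by auto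
  have "A105774 ` {1..fib (N+2)} = A105774 ` {1..fib (N+1)} \<union> A105774 ` {fib (N+1) + 1 .. fib (N+2)}"
    by (simp only: split image_Un)
  also have "\<dots> = {m. 1 \<le> m \<and> m < fib (N+1) \<and> \<not> phi_square_beatty m}
      \<union> {m. fib (N+1) < m \<and> m < fib (N+2) \<and> \<not> phi_square_beatty m}"
    using A105774_image_block[of N] image_reflect_non_phi_square_beatty[of N] IH1 IH2 N_def by simp
  also have "\<dots> = {m. 1 \<le> m \<and> m < fib (N+2) \<and> \<not> phi_square_beatty m}"
    using \<open>phi_square_beatty (fib (N+1))\<close> fib_pos_ge1[of "N+1"] F
    by (auto simp: not_less_iff_gr_or_eq)
  finally have "A105774 ` {1..fib (N+2)} = {m. 1 \<le> m \<and> m < fib (N+2) \<and> \<not> phi_square_beatty m}" .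
  then show ?case unfolding N_def by (simp add: add.commute add.left_commute)
qed

lemma A105774_attains_iff:
  assumes "m \<ge> 1"
  shows "(\<exists>n. A105774 n = m) \<longleftrightarrow> \<not> phi_square_beatty m"
proof
  assume "\<exists>n. A105774 n = m"
  then obtain n where n: "A105774 n = m" by blast
  with assms have "n \<noteq> 0" using A105774.simps[of 0] by (cases "n = 0") auto
  then have "n \<in> {1..fib (n+3)}" using Suc_le_fib_add_3[of n] by simp
  then show "\<not> phi_square_beatty m" using n A105774_image_upto_fib[of n] by blast
next
  assume "\<not> phi_square_beatty m"
  then have "m \<in> A105774 ` {1..fib (m+3)}"
    using A105774_image_upto_fib[of m] Suc_le_fib_add_3[of m] assms by simp
  then show "\<exists>n. A105774 n = m" by blast
qed

theorem proposition5:
  fixes m :: nat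
  assumes "m \<ge> 1"
  shows "(\<nexists>n. A105774 n = m) \<longleftrightarrow>
         (\<exists>k::nat. k \<ge> 1 \<and> int m = \<lfloor>phi ^ 2 * real k + 1/2\<rfloor>)"
  using A105774_attains_iff[OF assms] unfolding phi_square_beatty_def by blast

end
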